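(* Let $G$ be an elementary abelian $3$-group, let $S$ be a maximal sum-free set in $G$, and let $x\in S$. Then (i) $x^{-1}S=S^{-1}S$; and (ii) $xS=S^{-1}=SS$.
   Context: A non-empty subset $S$ of a group $G$ is called sum-free if for all $s_1,s_2\in S$ (including the case $s_1=s_2$) one has $s_1s_2\notin S$. A maximal sum-free set in a finite group $G$ means a sum-free set of largest possible cardinality among all sum-free sets in $G$. Notation: $xS=\{xs: s\in S\}$, $x^{-1}S=\{x^{-1}s: s\in S\}$, $S^{-1}=\{s^{-1}: s\in S\}$, $SS=\{st: s,t\in S\}$, $S^{-1}S=\{s^{-1}t: s,t\in S\}$. *)

theory Defs
  imports "HOL-Algebra.Algebra"
begin

definition sum_free :: "('a, 'b) monoid_scheme \<Rightarrow> 'a set \<Rightarrow> bool" where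
  "sum_free G S \<longleftrightarrow> S \<subseteq> carrier G \<and> S \<noteq> {} \<and>
     (\<forall>s1\<in>S. \<forall>s2\<in>S. s1 \<otimes>\<^bsub>G\<^esub> s2 \<notin> S)"

definition maximal_sum_free :: "('a, 'b) monoid_scheme \<Rightarrow> 'a set \<Rightarrow> bool" where
  "maximal_sum_free G S \<longleftrightarrow> sum_free G S \<and>
     (\<forall>T. sum_free G T \<longrightarrow> card T \<le> card S)"

definition elementary_abelian_3_group :: "('a, 'b) monoid_scheme \<Rightarrow> bool" where
  "elementary_abelian_3_group G \<longleftrightarrow> comm_group G \<and> finite (carrier G) \<and>
     (\<forall>x\<in>carrier G. x [^]\<^bsub>G\<^esub> (3::nat) = \<one>\<^bsub>G\<^esub>)"

end

theory Submission
  imports Defs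
begin

text \<open>If \<open>x \<in> S\<close> with \<open>S\<close> sum-free in a group of exponent 3, the translates \<open>S\<close>,
  \<open>x S\<close> and \<open>x\<inverse> S\<close> are pairwise disjoint, so \<open>3 |S| \<le> |G|\<close>; a coset \<open>g M\<close> of a
  subgroup of index 3 attains this bound. Hence a maximal sum-free \<open>S\<close> partitions \<open>G\<close>
  into \<open>S\<close>, \<open>x S\<close>, \<open>x\<inverse> S\<close> for every \<open>x \<in> S\<close>, and an element avoiding the first two
  translates lies in the third. Applied to \<open>a b\<inverse>\<close> this yields \<open>(a b)\<inverse> \<in> S\<close> for all
  \<open>a, b \<in> S\<close>, from which the identities follow.\<close>

lemma (in group) l_coset_eq_image: "a <# S = (\<lambda>s. a \<otimes> s) ` S"
  unfolding l_coset_def by auto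

lemma (in group) card_l_coset:
  assumes "a \<in> carrier G" and "S \<subseteq> carrier G"
  shows "card (a <# S) = card S"
proof -
  have "inj_on (\<lambda>s. a \<otimes> s) S"
    using assms by (intro inj_onI) (metis l_cancel subsetD)
  then show ?thesis
    by (simp add: l_coset_eq_image card_image)
qed

lemma (in group) sum_free_disjoint_l_coset:
  assumes "sum_free G S" and "x \<in> S"
  shows "S \<inter> (x <# S) = {}" and "S \<inter> (inv x <# S) = {}"
proof -
  have SG: "S \<subseteq> carrier G" and closed: "\<And>a b. a \<in> S \<Longrightarrow> b \<in> S \<Longrightarrow> a \<otimes> b \<notin> S"
    using assms(1) unfolding sum_free_def by auto
  show "S \<inter> (x <# S) = {}"
    using closed assms(2) unfolding l_coset_eq_image by auto
  show "S \<inter> (inv x <# S) = {}"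
  proof (rule ccontr)
    assume "S \<inter> (inv x <# S) \<noteq> {}"
    then obtain s where s: "s \<in> S" and xs: "inv x \<otimes> s \<in> S"
      unfolding l_coset_eq_image by auto
    have "x \<otimes> (inv x \<otimes> s) = s"
      using SG s assms(2) by (simp add: m_assoc[symmetric] subsetD)
    then show False
      using closed[OF assms(2) xs] s by simp
  qed
qed

locale exponent_3_group = group +
  assumes pow_3_eq_one: "y \<in> carrier G \<Longrightarrow> y [^] (3::nat) = \<one>"
begin

lemma inv_eq_square:
  assumes "y \<in> carrier G"
  shows "inv y = y \<otimes> y"
proof -
  have "(y \<otimes> y) \<otimes> y = \<one>"
    using pow_3_eq_one[OF assms] assms by (simp add: numeral_3_eq_3 nat_pow_Suc)
  then show ?thesis
    using assms inv_equality[of "y \<otimes> y" y] by simp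
qed

lemma sum_free_disjoint_l_coset_inv:
  assumes "sum_free G S" and "x \<in> S"
  shows "(x <# S) \<inter> (inv x <# S) = {}"
proof (rule ccontr)
  have SG: "S \<subseteq> carrier G" and closed: "\<And>a b. a \<in> S \<Longrightarrow> b \<in> S \<Longrightarrow> a \<otimes> b \<notin> S"
    using assms(1) unfolding sum_free_def by auto
  have xG: "x \<in> carrier G" using SG assms(2) by blast
  assume "(x <# S) \<inter> (inv x <# S) \<noteq> {}"
  then obtain s t where s: "s \<in> S" and t: "t \<in> S" and eq: "x \<otimes> t = inv x \<otimes> s"
    unfolding l_coset_eq_image by auto
  have sG: "s \<in> carrier G" and tG: "t \<in> carrier G"
    using SG s t by auto
  have "s = x \<otimes> (x \<otimes> t)"
    using eq xG sG tG inv_solve_left'[of "x \<otimes> t" x s] by simp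
  then have "x \<otimes> s = (x \<otimes> inv x) \<otimes> t"
    using xG tG inv_eq_square[OF xG] by (simp add: m_assoc)
  then have "x \<otimes> s = t"
    using xG tG by simp
  then show False
    using closed[OF assms(2) s] t by simp
qed

lemma card_sum_free_translates:
  assumes "sum_free G S" and "x \<in> S" and "finite (carrier G)"
  shows "card (S \<union> (x <# S) \<union> (inv x <# S)) = 3 * card S"
proof -
  have SG: "S \<subseteq> carrier G" and xG: "x \<in> carrier G"
    using assms(1,2) unfolding sum_free_def by auto
  have fin: "finite S" "finite (x <# S)" "finite (inv x <# S)"
    using finite_subset[OF SG assms(3)] unfolding l_coset_eq_image by auto
  have "card (S \<union> (x <# S) \<union> (inv x <# S)) = card S + card (x <# S) + card (inv x <# S)"
    using sum_free_disjoint_l_coset[OF assms(1,2)] sum_free_disjoint_l_coset_inv[OF assms(1,2)] fin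
    by (simp add: card_Un_disjoint Int_Un_distrib2)
  then show ?thesis
    using card_l_coset[OF xG SG] card_l_coset[OF inv_closed[OF xG] SG] by simp
qed

lemma card_sum_free_le:
  assumes "sum_free G S" and "x \<in> S" and "finite (carrier G)"
  shows "3 * card S \<le> card (carrier G)"
proof -
  have "S \<union> (x <# S) \<union> (inv x <# S) \<subseteq> carrier G"
    using assms(1,2) unfolding sum_free_def l_coset_eq_image by auto
  then show ?thesis
    using card_mono[OF assms(3)] card_sum_free_translates[OF assms] by metis
qed

lemma sum_free_translates_cover:
  assumes "sum_free G S" and "x \<in> S" and "finite (carrier G)"
    and "card (carrier G) = 3 * card S"
  shows "carrier G = S \<union> (x <# S) \<union> (inv x <# S)"
proof -
  have "S \<union> (x <# S) \<union> (inv x <# S) \<subseteq> carrier G"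
    using assms(1,2) unfolding sum_free_def l_coset_eq_image by auto
  then show ?thesis
    using card_subset_eq[OF assms(3)] card_sum_free_translates[OF assms(1-3)] assms(4)
    by metis
qed

end

locale exponent_3_comm_group = comm_group + exponent_3_group
begin

lemma subgroup_union_l_cosets:
  assumes M: "subgroup M G" and g: "g \<in> carrier G"
  shows "subgroup (M \<union> (g <# M) \<union> (inv g <# M)) G"
proof -
  interpret M: subgroup M G by (rule M)
  define U where "U = {\<one>, g, inv g}"
  have UG: "U \<subseteq> carrier G" using g unfolding U_def by auto
  have "g \<otimes> g = inv g"
    using inv_eq_square[OF g] by simp
  moreover have "inv g \<otimes> inv g = g"
    using inv_eq_square[OF inv_closed[OF g]] inv_inv[OF g] by simp
  ultimately have U_mult: "u \<otimes> v \<in> U" if "u \<in> U" "v \<in> U" for u v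
    using that g unfolding U_def by auto
  have U_inv: "inv u \<in> U" if "u \<in> U" for u
    using that g unfolding U_def by auto
  have mem: "c \<in> M \<union> (g <# M) \<union> (inv g <# M) \<longleftrightarrow> (\<exists>u\<in>U. \<exists>m\<in>M. c = u \<otimes> m)" for c
    unfolding U_def l_coset_eq_image by auto
  show ?thesis
  proof (rule subgroupI)
    show "M \<union> (g <# M) \<union> (inv g <# M) \<subseteq> carrier G"
      using g unfolding l_coset_eq_image by auto
    show "M \<union> (g <# M) \<union> (inv g <# M) \<noteq> {}"
      using M.one_closed by blast
  next
    fix a assume "a \<in> M \<union> (g <# M) \<union> (inv g <# M)"
    then obtain u m where "u \<in> U" "m \<in> M" "a = u \<otimes> m" using mem by blast
    moreover have "inv (u \<otimes> m) = inv u \<otimes> inv m"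
      using \<open>u \<in> U\<close> \<open>m \<in> M\<close> UG by (auto simp: inv_mult)
    ultimately show "inv a \<in> M \<union> (g <# M) \<union> (inv g <# M)"
      using mem U_inv by auto
  next
    fix a b assume "a \<in> M \<union> (g <# M) \<union> (inv g <# M)" "b \<in> M \<union> (g <# M) \<union> (inv g <# M)"
    then obtain u m v n where "u \<in> U" "m \<in> M" "a = u \<otimes> m" "v \<in> U" "n \<in> M" "b = v \<otimes> n"
      using mem by meson
    moreover have "(u \<otimes> m) \<otimes> (v \<otimes> n) = (u \<otimes> v) \<otimes> (m \<otimes> n)"
      using calculation UG by (simp add: m_ac subsetD)
    ultimately show "a \<otimes> b \<in> M \<union> (g <# M) \<union> (inv g <# M)"
      using mem U_mult by auto
  qed
qed

lemma sum_free_l_coset: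
  assumes M: "subgroup M G" and g: "g \<in> carrier G" "g \<notin> M"
  shows "sum_free G (g <# M)"
proof -
  interpret M: subgroup M G by (rule M)
  have "s \<otimes> t \<notin> g <# M" if st: "s \<in> g <# M" "t \<in> g <# M" for s t
  proof
    obtain m n where mn: "m \<in> M" "n \<in> M" "s = g \<otimes> m" "t = g \<otimes> n"
      using st unfolding l_coset_eq_image by auto
    assume "s \<otimes> t \<in> g <# M"
    then obtain k where k: "k \<in> M" "s \<otimes> t = g \<otimes> k"
      unfolding l_coset_eq_image by auto
    have "inv g \<otimes> (m \<otimes> n) = g \<otimes> k"
      using k mn g inv_eq_square[OF g(1)] by (simp add: m_ac)
    \<comment> \<open>hence \<open>m n = g\<^sup>2 k = g\<inverse> k\<close>, so \<open>g = k (m n)\<inverse>\<close>\<close>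
    then have "g = k \<otimes> inv (m \<otimes> n)"
      using k mn g inv_eq_square[OF g(1)] inv_solve_right'[of "g \<otimes> g" "m \<otimes> n" k]
      by (auto simp: m_ac inv_mult_group)
    then show False
      using g(2) k mn by simp
  qed
  moreover have "g <# M \<subseteq> carrier G"
    using g unfolding l_coset_eq_image by auto
  moreover have "g <# M \<noteq> {}"
    using M.one_closed unfolding l_coset_eq_image by blast
  ultimately show ?thesis
    unfolding sum_free_def by blast
qed

lemma exists_maximal_proper_subgroup:
  assumes "finite (carrier G)" and "carrier G \<noteq> {\<one>}"
  obtains M where "subgroup M G" and "M \<noteq> carrier G"
    and "\<And>N. subgroup N G \<Longrightarrow> N \<noteq> carrier G \<Longrightarrow> card N \<le> card M"
proof -
  have "subgroup {\<one>} G \<and> {\<one>} \<noteq> carrier G"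
    using triv_subgroup assms(2) by auto
  moreover have "card N < card (carrier G) + 1" if "subgroup N G" for N
    using card_mono[OF assms(1) subgroup.subset[OF that]] by simp
  ultimately obtain M where "subgroup M G \<and> M \<noteq> carrier G"
    and "\<forall>N. subgroup N G \<and> N \<noteq> carrier G \<longrightarrow> card N \<le> card M"
    using Lattices_Big.ex_has_greatest_nat[of "\<lambda>N. subgroup N G \<and> N \<noteq> carrier G" "{\<one>}" card]
    by blast
  then show ?thesis
    using that by blast
qed

lemma exists_large_sum_free:
  assumes fin: "finite (carrier G)" and nontriv: "carrier G \<noteq> {\<one>}"
  obtains T where "sum_free G T" and "card (carrier G) \<le> 3 * card T"
proof -
  obtain M where M: "subgroup M G" "M \<noteq> carrier G"
    and greatest: "\<And>N. subgroup N G \<Longrightarrow> N \<noteq> carrier G \<Longrightarrow> card N \<le> card M"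
    using exists_maximal_proper_subgroup[OF assms] by blast
  have MG: "M \<subseteq> carrier G" by (rule subgroup.subset[OF M(1)])
  obtain g where g: "g \<in> carrier G" "g \<notin> M" using M(2) MG by blast
  define K where "K = M \<union> (g <# M) \<union> (inv g <# M)"
  have K: "subgroup K G"
    unfolding K_def by (rule subgroup_union_l_cosets[OF M(1) g(1)])
  have "K = carrier G"
  proof (rule ccontr)
    assume "K \<noteq> carrier G"
    then have "card K \<le> card M"
      using greatest[OF K] by blast
    moreover have "g \<in> g <# M"
      using g(1) subgroup.one_closed[OF M(1)] unfolding l_coset_eq_image by (metis image_eqI r_one)
    then have "M \<subset> K"
      using g(2) unfolding K_def by blast
    then have "card M < card K"
      using psubset_card_mono finite_subset[OF subgroup.subset[OF K] fin] by blast
    ultimately show False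
      by simp
  qed
  then have "card (carrier G) = card (M \<union> (g <# M) \<union> (inv g <# M))"
    unfolding K_def by simp
  also have "\<dots> \<le> card (M \<union> (g <# M)) + card (inv g <# M)"
    by (rule card_Un_le)
  also have "\<dots> \<le> card M + card (g <# M) + card (inv g <# M)"
    using card_Un_le by simp
  also have "\<dots> = 3 * card (g <# M)"
    using card_l_coset[OF g(1) MG] card_l_coset[OF inv_closed[OF g(1)] MG] by simp
  finally have "card (carrier G) \<le> 3 * card (g <# M)" .
  then show ?thesis
    using that sum_free_l_coset[OF M(1) g] by blast
qed

context
  fixes S
  assumes fin: "finite (carrier G)" and S: "maximal_sum_free G S"
begin

lemma maximal_sum_free_sum_free: "sum_free G S"
  using S unfolding maximal_sum_free_def by blast

lemma maximal_sum_free_mem_carrier [simp]: "a \<in> S \<Longrightarrow> a \<in> carrier G"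
  using maximal_sum_free_sum_free unfolding sum_free_def by blast

lemma maximal_sum_free_mult_notin: "a \<in> S \<Longrightarrow> b \<in> S \<Longrightarrow> a \<otimes> b \<notin> S"
  using maximal_sum_free_sum_free unfolding sum_free_def by blast

lemma maximal_sum_free_translates_cover:
  assumes "x \<in> S"
  shows "carrier G = S \<union> (x <# S) \<union> (inv x <# S)"
proof -
  have "x \<noteq> \<one>"
    using maximal_sum_free_mult_notin[OF assms assms] assms by (metis one_closed l_one)
  then have "carrier G \<noteq> {\<one>}"
    using assms maximal_sum_free_mem_carrier by blast
  then obtain T where "sum_free G T" "card (carrier G) \<le> 3 * card T"
    using exists_large_sum_free[OF fin] by blast
  moreover have "card T \<le> card S"
    using S \<open>sum_free G T\<close> unfolding maximal_sum_free_def by blast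
  ultimately have "card (carrier G) = 3 * card S"
    using card_sum_free_le[OF maximal_sum_free_sum_free assms fin] by linarith
  then show ?thesis
    using sum_free_translates_cover[OF maximal_sum_free_sum_free assms fin] by blast
qed

lemma maximal_sum_free_mem_third_translate:
  assumes "x \<in> S" and "y \<in> carrier G" and "y \<notin> S" and "y \<notin> x <# S"
  shows "y \<in> inv x <# S"
  using maximal_sum_free_translates_cover[OF assms(1)] assms(2-4) by blast

lemma maximal_sum_free_inv_mult_mem:
  assumes a: "a \<in> S" and b: "b \<in> S"
  shows "inv (a \<otimes> b) \<in> S"
proof -
  define y where "y = a \<otimes> inv b"
  have yG: "y \<in> carrier G"
    using a b unfolding y_def by simp
  have "y \<notin> S"
  proof
    assume "y \<in> S"
    moreover have "y \<otimes> b = a"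
      using a b unfolding y_def by (simp add: m_assoc)
    ultimately show False
      using maximal_sum_free_mult_notin[OF _ b] a by metis
  qed
  moreover have "y \<notin> a <# S"
  proof
    assume "y \<in> a <# S"
    then have "inv b \<in> S"
      using a b unfolding y_def l_coset_eq_image by auto
    then show False
      using maximal_sum_free_mult_notin[OF b b] inv_eq_square[of b] b by simp
  qed
  ultimately obtain t where t: "t \<in> S" "y = inv a \<otimes> t"
    using maximal_sum_free_mem_third_translate[OF a yG] unfolding l_coset_eq_image by auto
  have "t = a \<otimes> y"
    using t a yG by (simp add: inv_solve_left)
  also have "\<dots> = inv a \<otimes> inv b"
    using a b inv_eq_square[of a] unfolding y_def by (simp add: m_assoc)
  also have "\<dots> = inv (a \<otimes> b)"
    using a b by (simp add: inv_mult)
  finally show ?thesis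
    using t(1) by simp
qed

lemma maximal_sum_free_l_coset_eq_set_mult:
  assumes x: "x \<in> S"
  shows "x <# S = S <#> S"
proof
  show "x <# S \<subseteq> S <#> S"
    using x unfolding l_coset_eq_image set_mult_def by auto
  show "S <#> S \<subseteq> x <# S"
  proof
    fix y assume "y \<in> S <#> S"
    then obtain a b where ab: "a \<in> S" "b \<in> S" "y = a \<otimes> b"
      unfolding set_mult_def by auto
    then have yG: "y \<in> carrier G"
      by simp
    show "y \<in> x <# S"
    proof (rule ccontr)
      assume "y \<notin> x <# S"
      then obtain s where s: "s \<in> S" "y = inv x \<otimes> s"
        using maximal_sum_free_mem_third_translate[OF x yG] maximal_sum_free_mult_notin ab
        unfolding l_coset_eq_image by blast
      then have "s = x \<otimes> y"
        using x yG by (simp add: inv_solve_left)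
      \<comment> \<open>so \<open>x = y\<inverse> s\<close> is a product of two elements of \<open>S\<close>\<close>
      then have "inv y \<otimes> s = x"
        using x yG by (simp add: m_lcomm)
      then show False
        using maximal_sum_free_mult_notin[OF _ s(1)] maximal_sum_free_inv_mult_mem[OF ab(1,2)] ab(3) x
        by metis
    qed
  qed
qed

lemma maximal_sum_free_set_inv_eq_l_coset:
  assumes x: "x \<in> S"
  shows "set_inv S = x <# S"
proof
  show "set_inv S \<subseteq> x <# S"
  proof
    fix y assume "y \<in> set_inv S"
    then obtain s where "s \<in> S" "y = s \<otimes> s"
      using inv_eq_square unfolding SET_INV_def by auto
    then show "y \<in> x <# S"
      using maximal_sum_free_l_coset_eq_set_mult[OF x] unfolding set_mult_def by auto
  qed
  show "x <# S \<subseteq> set_inv S"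
  proof
    fix y assume "y \<in> x <# S"
    then obtain s where s: "s \<in> S" "y = x \<otimes> s"
      unfolding l_coset_eq_image by auto
    then have "y = inv (inv (x \<otimes> s))"
      using x by simp
    then show "y \<in> set_inv S"
      using maximal_sum_free_inv_mult_mem[OF x s(1)] unfolding SET_INV_def by blast
  qed
qed

lemma maximal_sum_free_inv_l_coset_eq_set_mult:
  assumes x: "x \<in> S"
  shows "inv x <# S = set_inv S <#> S"
proof
  show "inv x <# S \<subseteq> set_inv S <#> S"
    using x unfolding l_coset_eq_image set_mult_def SET_INV_def by auto
  show "set_inv S <#> S \<subseteq> inv x <# S"
  proof
    fix y assume "y \<in> set_inv S <#> S"
    then obtain a b where ab: "a \<in> S" "b \<in> S" "y = inv a \<otimes> b"
      unfolding set_mult_def SET_INV_def by auto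
    then have yG: "y \<in> carrier G"
      by simp
    have b_eq: "b = a \<otimes> y"
      using ab by (simp add: m_assoc[symmetric])
    have "y \<notin> S"
      using maximal_sum_free_mult_notin[OF ab(1)] b_eq ab(2) by auto
    moreover have "y \<notin> x <# S"
    proof
      assume "y \<in> x <# S"
      then obtain s where s: "s \<in> S" "y = x \<otimes> s"
        unfolding l_coset_eq_image by auto
      \<comment> \<open>then \<open>s = (a x)\<inverse> b\<close> is a product of two elements of \<open>S\<close>\<close>
      have "b = (a \<otimes> x) \<otimes> s"
        using b_eq s ab x by (simp add: m_assoc)
      then have "s = inv (a \<otimes> x) \<otimes> b"
        using ab x s by (simp add: inv_solve_left)
      then show False
        using maximal_sum_free_mult_notin[OF maximal_sum_free_inv_mult_mem[OF ab(1) x] ab(2)] s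
        by metis
    qed
    ultimately show "y \<in> inv x <# S"
      using maximal_sum_free_mem_third_translate[OF x yG] by blast
  qed
qed

end

end

lemma elementary_abelian_3_group_imp_exponent_3_comm_group:
  assumes "elementary_abelian_3_group G"
  shows "exponent_3_comm_group G"
  using assms comm_group.axioms(2)
  unfolding elementary_abelian_3_group_def exponent_3_comm_group_def exponent_3_group_def
    exponent_3_group_axioms_def
  by blast

theorem proposition1:
  fixes G (structure) and S :: "'a set" and x :: 'a
  assumes "elementary_abelian_3_group G"
    and "maximal_sum_free G S"
    and "x \<in> S"
  shows "(inv x) <# S = (set_inv S) <#> S \<and>
         (x <# S = set_inv S \<and> set_inv S = S <#> S)"
proof -
  interpret exponent_3_comm_group G
    using assms(1) by (rule elementary_abelian_3_group_imp_exponent_3_comm_group)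
  have fin: "finite (carrier G)"
    using assms(1) unfolding elementary_abelian_3_group_def by blast
  show ?thesis
    using maximal_sum_free_inv_l_coset_eq_set_mult[OF fin assms(2,3)]
      maximal_sum_free_set_inv_eq_l_coset[OF fin assms(2,3)]
      maximal_sum_free_l_coset_eq_set_mult[OF fin assms(2,3)]
    by simp
qed

end
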